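(* In the setting described in the context, let $u_1=\min\{x\in[d,v]: f^{2}(x)=d\}$, $\breve u_0'=\max\{x\in[u_1,v]: f^2(x)=d\}$, and for $n\ge1$ let $\breve\mu_{m,n}=\min\{x\in[\breve u_0',v]: f^{m+2n}(x)=d\}$ (these sets are nonempty). Then for each $n\ge1$, every periodic point of $f$ in $[\breve u_0',\breve\mu_{m,n}]$ whose least period is odd has least period $\ge m+2n$.
   Context: Let $I$ be a compact interval and $f:I\to I$ continuous; $f^1=f$, $f^n=f\circ f^{n-1}$. A point $x_0$ is a periodic point of least period $k$ (a period-$k$ point) if $f^k(x_0)=x_0$ and $f^i(x_0)\ne x_0$ for $0<i<k$. Let $m\ge3$ be odd and let $P$ be a periodic orbit of $f$ of least period $m$. Put $e=f^{m-1}(\min P)$. Let $v\in[\min P,e)$ be a point with $f(v)=e$, and let $z\in(v,e)$ be a fixed point of $f$ (such points exist). Define $z_0=\min\{x\in[v,z]: f^2(x)=x\}$ and $d=\max\{x\in[\min P,v]: f^2(x)=z_0\}$ (both sets are nonempty). *)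

theory Defs
  imports "HOL-Analysis.Analysis"
begin

definition least_period :: "(real \<Rightarrow> real) \<Rightarrow> nat \<Rightarrow> real \<Rightarrow> bool" where
  "least_period f k x \<longleftrightarrow> 0 < k \<and> (f ^^ k) x = x \<and> (\<forall>i. 0 < i \<and> i < k \<longrightarrow> (f ^^ i) x \<noteq> x)"

definition periodic_orbit :: "(real \<Rightarrow> real) \<Rightarrow> real set \<Rightarrow> nat \<Rightarrow> real set \<Rightarrow> bool" where
  "periodic_orbit f S k P \<longleftrightarrow>
     (\<exists>p\<in>S. least_period f k p \<and> P = {(f ^^ i) p | i. i < k})"

end

(*
  The points are arranged so that f^2 maps [v, z0] over [Min P, z0] and f^4 sends u0' to z0;
  hence every odd iterate f^j with j \<ge> 5 sends u0' to f z0 \<ge> z0.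

  Suppose y \<in> [u0', mu n] has odd least period k < m + 2n. The orbit of y never meets d,
  for otherwise it would meet z0, whose orbit {z0, f z0} lies to the right of v. So
  f^2 y < d < y, which excludes k = 1, and some odd iterate f^j y with 5 \<le> j \<le> m + 2n lies
  left of v (j = k, or j = 5 when k = 3). By the intermediate value theorem f^j maps
  [u0', y] over [f^j y, z0], and following it by an even iterate of f on [v, z0] yields
  x \<in> [u0', y] with f^(m+2n) x = d. Minimality of mu n forces x = y, a contradiction.
*)

theory Submission
  imports Defs
begin

lemma funpow_self_map:
  assumes "continuous_on S f" "f ` S \<subseteq> S"
  shows "continuous_on S (f ^^ n) \<and> (f ^^ n) ` S \<subseteq> S"
proof (induction n)
  case (Suc n)
  then show ?case
    using assms by (auto intro: continuous_on_compose2[OF assms(1)])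
qed simp

lemma IVT_between:
  fixes g :: "real \<Rightarrow> real"
  assumes "continuous_on {s..t} g" "s \<le> t" "min (g s) (g t) \<le> c" "c \<le> max (g s) (g t)"
  shows "\<exists>x\<in>{s..t}. g x = c"
proof -
  have "c \<in> closed_segment (g s) (g t)"
    using assms(3,4) by (auto simp: closed_segment_eq_real_ivl)
  then show ?thesis
    using IVT'_closed_segment_real[of c g s t] assms(1,2) by (simp add: closed_segment_eq_real_ivl)
qed

lemma level_set_Inf_Sup:
  fixes h :: "real \<Rightarrow> real"
  assumes "continuous_on {s..t} h" "x \<in> {s..t}" "h x = c"
  defines "L \<equiv> {x \<in> {s..t}. h x = c}"
  shows "Inf L \<in> L" "Sup L \<in> L" "\<And>y. y \<in> L \<Longrightarrow> Inf L \<le> y" "\<And>y. y \<in> L \<Longrightarrow> y \<le> Sup L"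
proof -
  have "closed L"
    using continuous_closed_preimage_constant[OF assms(1)] by (simp add: L_def)
  moreover have "L \<noteq> {}" "bdd_below L" "bdd_above L"
    using assms(2,3) by (auto simp: L_def intro!: bdd_belowI bdd_aboveI)
  ultimately show "Inf L \<in> L" "Sup L \<in> L" "\<And>y. y \<in> L \<Longrightarrow> Inf L \<le> y" "\<And>y. y \<in> L \<Longrightarrow> y \<le> Sup L"
    by (auto intro: closed_contains_Inf closed_contains_Sup cInf_lower cSup_upper)
qed

lemma first_fixed_point:
  fixes h :: "real \<Rightarrow> real"
  assumes cont: "continuous_on {s..t} h" and "h s < s" "h t = t" "s \<le> t"
  defines "w \<equiv> Inf {x \<in> {s..t}. h x = x}"
  shows "s < w" "w \<le> t" "h w = w" "\<And>x. s \<le> x \<Longrightarrow> x < w \<Longrightarrow> h x < x"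
proof -
  have "continuous_on {s..t} (\<lambda>x. h x - x)"
    using cont by (intro continuous_intros)
  note L = level_set_Inf_Sup[OF this, of t 0]
  have eq: "{x \<in> {s..t}. h x - x = 0} = {x \<in> {s..t}. h x = x}"
    by auto
  have w: "w \<in> {s..t}" "h w = w" and w_le: "\<And>y. y \<in> {s..t} \<Longrightarrow> h y = y \<Longrightarrow> w \<le> y"
    using L assms(3,4) by (auto simp: eq w_def)
  show "h w = w" "w \<le> t"
    using w by auto
  show "s < w"
    using w assms(2) by (cases "w = s") auto
  show "h x < x" if x: "s \<le> x" "x < w" for x
  proof (rule ccontr)
    assume "\<not> h x < x"
    moreover have "continuous_on {s..x} (\<lambda>x. h x - x)"
      using x w by (intro continuous_intros continuous_on_subset[OF cont]) auto
    ultimately obtain y where "y \<in> {s..x}" "h y - y = 0"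
      using IVT_between[of s x "\<lambda>x. h x - x" 0] x assms(2) by auto
    then show False
      using w_le[of y] x w by auto
  qed
qed

lemma funpow_crossing:
  fixes g :: "'a::linorder \<Rightarrow> 'a"
  assumes "x < c" "c \<le> (g ^^ N) x"
  shows "\<exists>i<N. (g ^^ i) x < c \<and> c \<le> (g ^^ Suc i) x"
  using assms(2)
proof (induction N)
  case 0
  then show ?case using assms(1) by simp
next
  case (Suc N)
  show ?case
  proof (cases "c \<le> (g ^^ N) x")
    case True
    with Suc.IH show ?thesis
      using less_SucI by blast
  next
    case False
    with Suc.prems show ?thesis
      by (intro exI[of _ N]) auto
  qed
qed

lemma funpow_image_superset:
  assumes "T \<subseteq> g ` S" "S \<subseteq> T"
  shows "T \<subseteq> (g ^^ Suc i) ` S"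
proof (induction i)
  case (Suc i)
  have "T \<subseteq> (g ^^ Suc i) ` S" by (fact Suc)
  also have "\<dots> \<subseteq> (g ^^ Suc i) ` g ` S"
    using assms by (intro image_mono) auto
  also have "\<dots> = (g ^^ Suc (Suc i)) ` S"
    by (simp only: funpow_Suc_right image_comp)
  finally show ?case .
qed (use assms in simp)

lemma funpow_mod_period:
  assumes "(f ^^ k) p = p"
  shows "(f ^^ n) p = (f ^^ (n mod k)) p"
proof -
  have fixed: "((f ^^ k) ^^ r) p = p" for r
    by (induction r) (simp_all add: assms)
  have "(f ^^ n) p = (f ^^ (n mod k + k * (n div k))) p"
    by simp
  also have "\<dots> = (f ^^ (n mod k)) (((f ^^ k) ^^ (n div k)) p)"
    by (simp only: funpow_add funpow_mult comp_apply)
  also have "\<dots> = (f ^^ (n mod k)) p"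
    by (simp only: fixed)
  finally show ?thesis .
qed

lemma periodic_point_in_orbit:
  assumes "(f ^^ k) y = y" "0 < k"
  shows "\<exists>r. (f ^^ r) ((f ^^ s) y) = y"
proof
  have "(f ^^ (k * s - s)) ((f ^^ s) y) = (f ^^ (k * s - s + s)) y"
    by (simp only: funpow_add comp_apply)
  also have "k * s - s + s = k * s"
    using assms(2) by simp
  also have "(f ^^ (k * s)) y = y"
    using funpow_mod_period[OF assms(1), of "k * s"] by simp
  finally show "(f ^^ (k * s - s)) ((f ^^ s) y) = y" .
qed

lemma periodic_orbitD:
  assumes "periodic_orbit f S k P" "f ` S \<subseteq> S"
  shows "finite P" "P \<noteq> {}" "P \<subseteq> S"
    and "\<And>q j. q \<in> P \<Longrightarrow> (f ^^ j) q \<in> P" "\<And>q. q \<in> P \<Longrightarrow> (f ^^ k) q = q"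
proof -
  obtain p where p: "p \<in> S" "least_period f k p" and P: "P = (\<lambda>i. (f ^^ i) p) ` {..<k}"
    using assms(1) unfolding periodic_orbit_def by blast
  have k: "0 < k" "(f ^^ k) p = p"
    using p(2) by (auto simp: least_period_def)
  show "finite P" "P \<noteq> {}"
    using P k by auto
  have "(f ^^ i) p \<in> S" for i
    using p(1) assms(2) by (induction i) auto
  then show "P \<subseteq> S"
    using P by auto
  have shift: "(f ^^ j) ((f ^^ i) p) = (f ^^ ((j + i) mod k)) p" for i j
    using funpow_mod_period[OF k(2)] by (simp add: funpow_add)
  show "(f ^^ j) q \<in> P" if "q \<in> P" for q j
    using that k(1) by (auto simp: P shift)
  show "(f ^^ k) q = q" if "q \<in> P" for q
    using that by (auto simp: P shift)
qed

locale odd_orbit_setting =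
  fixes f :: "real \<Rightarrow> real" and a b :: real and m :: nat and P :: "real set" and v z :: real
  assumes cont: "continuous_on {a..b} f"
    and maps: "f ` {a..b} \<subseteq> {a..b}"
    and m_odd: "odd m" and m_ge: "m \<ge> 3"
    and orb: "periodic_orbit f {a..b} m P"
    and v_in: "v \<in> {Min P ..< (f ^^ (m - 1)) (Min P)}"
    and v_map: "f v = (f ^^ (m - 1)) (Min P)"
    and z_in: "z \<in> {v <..< (f ^^ (m - 1)) (Min P)}"
    and z_fix: "f z = z"
begin

abbreviation e :: real where "e \<equiv> (f ^^ (m - 1)) (Min P)"

lemmas orbit = periodic_orbitD[OF orb maps]

lemma Min_P_in: "Min P \<in> P"
  using orbit(1,2) by simp

lemma continuous_on_funpow: "a \<le> s \<Longrightarrow> t \<le> b \<Longrightarrow> continuous_on {s..t} (f ^^ N)"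
  by (rule continuous_on_subset[OF conjunct1[OF funpow_self_map[OF cont maps]]]) auto

lemma f_e: "f e = Min P"
proof -
  have "f e = (f ^^ Suc (m - 1)) (Min P)"
    by simp
  also have "Suc (m - 1) = m"
    using m_ge by simp
  finally show ?thesis
    using orbit(5)[OF Min_P_in] by simp
qed

lemma f2_v: "(f ^^ 2) v = Min P"
  using v_map f_e by (simp add: numeral_2_eq_2)

lemma Min_P_less_v: "Min P < v"
proof -
  have "(f ^^ 2) (Min P) \<noteq> Min P"
  proof
    assume "(f ^^ 2) (Min P) = Min P"
    moreover have "(m - 1) mod 2 = 0"
      using m_odd by presburger
    ultimately have "e = Min P"
      using funpow_mod_period[where f = f and k = 2 and p = "Min P" and n = "m - 1"] by simp
    then show False
      using v_in by simp
  qed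
  then have "v \<noteq> Min P"
    using f2_v by auto
  then show ?thesis
    using v_in by simp
qed

lemma interval_bounds: "a \<le> Min P" "v < z" "z < e" "e \<le> b"
proof -
  have "e \<in> P"
    using orbit(4)[OF Min_P_in] .
  then show "a \<le> Min P" "e \<le> b"
    using Min_P_in orbit(3) by auto
qed (use z_in in auto)

definition z0 :: real where "z0 = Inf {x \<in> {v..z}. (f ^^ 2) x = x}"

lemma z0_props: "v < z0" "z0 \<le> z" "(f ^^ 2) z0 = z0" "\<And>x. v \<le> x \<Longrightarrow> x < z0 \<Longrightarrow> (f ^^ 2) x < x"
proof -
  have "(f ^^ 2) z = z"
    using z_fix by (simp add: numeral_2_eq_2)
  moreover have "continuous_on {v..z} (f ^^ 2)"
    using interval_bounds Min_P_less_v by (intro continuous_on_funpow) auto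
  ultimately show "v < z0" "z0 \<le> z" "(f ^^ 2) z0 = z0" "\<And>x. v \<le> x \<Longrightarrow> x < z0 \<Longrightarrow> (f ^^ 2) x < x"
    using first_fixed_point[of v z "f ^^ 2"] f2_v Min_P_less_v interval_bounds
    unfolding z0_def by auto
qed

text \<open>Otherwise f would have a fixed point in [v, z0), since f v = e > v.\<close>
lemma z0_le_f_z0: "z0 \<le> f z0"
proof (rule ccontr)
  assume "\<not> z0 \<le> f z0"
  moreover have "continuous_on {v..z0} (\<lambda>x. f x - x)"
    using continuous_on_funpow[of v z0 1] interval_bounds Min_P_less_v z0_props
    by (auto intro!: continuous_intros)
  ultimately obtain x where x: "x \<in> {v..z0}" "f x - x = 0"
    using IVT_between[of v z0 "\<lambda>x. f x - x" 0] z0_props(1) v_map v_in by force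
  then have "x < z0"
    using \<open>\<not> z0 \<le> f z0\<close> by (cases "x = z0") auto
  then show False
    using z0_props(4)[of x] x by (simp add: numeral_2_eq_2)
qed

lemma funpow_z0: "(f ^^ r) z0 = (if even r then z0 else f z0)"
  using funpow_mod_period[OF z0_props(3), of r] by (simp add: odd_iff_mod_2_eq_one)

definition d :: real where "d = Sup {x \<in> {Min P..v}. (f ^^ 2) x = z0}"

lemma d_props: "Min P \<le> d" "d < v" "(f ^^ 2) d = z0"
proof -
  have "2 * ((m - 1) div 2) = m - 1"
    using m_odd by presburger
  then have "z0 \<le> ((f ^^ 2) ^^ ((m - 1) div 2)) (Min P)"
    using z0_props(2) interval_bounds by (simp add: funpow_mult)
  \<comment> \<open>the f^2-orbit of Min P starts below z0 and reaches e > z0, so it crosses z0\<close>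
  then obtain i where i: "((f ^^ 2) ^^ i) (Min P) < z0" "z0 \<le> (f ^^ 2) (((f ^^ 2) ^^ i) (Min P))"
    using funpow_crossing[of "Min P" z0] Min_P_less_v z0_props(1) by fastforce
  define q where "q = ((f ^^ 2) ^^ i) (Min P)"
  have "q \<in> P"
    using orbit(4)[OF Min_P_in] by (simp add: q_def funpow_mult)
  then have q: "Min P \<le> q" "q < z0" "z0 \<le> (f ^^ 2) q"
    using i orbit(1) by (auto simp: q_def)
  have "q < v"
    using z0_props(4)[of q] q by force
  then obtain x where "x \<in> {q..v}" "(f ^^ 2) x = z0"
    using IVT_between[of q v "f ^^ 2" z0] continuous_on_funpow[of q v 2] q f2_v
      interval_bounds Min_P_less_v z0_props(1) by auto
  then have "x \<in> {Min P..v}" "(f ^^ 2) x = z0"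
    using q by auto
  note L = level_set_Inf_Sup[OF continuous_on_funpow this, folded d_def]
  show "Min P \<le> d" "(f ^^ 2) d = z0"
    using L interval_bounds by auto
  show "d < v"
    using L(2) f2_v Min_P_less_v z0_props(1) interval_bounds by (cases "d = v") auto
qed

definition u1 :: real where "u1 = Inf {x \<in> {d..v}. (f ^^ 2) x = d}"

lemma u1_props: "d < u1" "u1 \<le> v" "(f ^^ 2) u1 = d"
proof -
  obtain x where "x \<in> {d..v}" "(f ^^ 2) x = d"
    using IVT_between[of d v "f ^^ 2" d] continuous_on_funpow[of d v 2] d_props f2_v
      interval_bounds z0_props(1) by auto
  note L = level_set_Inf_Sup[OF continuous_on_funpow this, folded u1_def]
  show "u1 \<le> v" "(f ^^ 2) u1 = d"
    using L interval_bounds d_props by auto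
  show "d < u1"
    using L(1) d_props z0_props(1) interval_bounds by (cases "u1 = d") auto
qed

definition u0' :: real where "u0' = Sup {x \<in> {u1..v}. (f ^^ 2) x = d}"

lemma u0'_props: "d < u0'" "u0' \<le> v" "(f ^^ 2) u0' = d"
  "\<And>x. u0' < x \<Longrightarrow> x \<le> v \<Longrightarrow> (f ^^ 2) x \<le> d"
proof -
  have bounds: "a \<le> u1" "v \<le> b"
    using u1_props d_props interval_bounds by auto
  have "u1 \<in> {u1..v}" "(f ^^ 2) u1 = d"
    using u1_props by auto
  note L = level_set_Inf_Sup[OF continuous_on_funpow[OF bounds] this, folded u0'_def]
  show "d < u0'" "u0' \<le> v" "(f ^^ 2) u0' = d"
    using L(2) L(4)[of u1] u1_props by auto
  show "(f ^^ 2) x \<le> d" if x: "u0' < x" "x \<le> v" for x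
  proof (rule ccontr)
    assume "\<not> (f ^^ 2) x \<le> d"
    then obtain t where "t \<in> {x..v}" "(f ^^ 2) t = d"
      using IVT_between[of x v "f ^^ 2" d] continuous_on_funpow[of x v 2] x f2_v d_props
        L(2) u1_props bounds by auto
    then show False
      using L(4)[of t] x L(2) by auto
  qed
qed

lemma funpow_u0': assumes "odd j" "5 \<le> j" shows "(f ^^ j) u0' = f z0"
proof -
  have j: "j = j - 4 + 2 + 2"
    using assms(2) by simp
  have "(f ^^ j) u0' = (f ^^ (j - 4)) ((f ^^ 2) ((f ^^ 2) u0'))"
    by (subst j) (simp only: funpow_add comp_apply)
  also have "\<dots> = (f ^^ (j - 4)) z0"
    using u0'_props(3) d_props(3) by simp
  also have "\<dots> = f z0"
    using assms by (simp add: funpow_z0)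
  finally show ?thesis .
qed

lemma f2_image: "{Min P..z0} \<subseteq> (f ^^ 2) ` {v..z0}"
proof
  fix c assume "c \<in> {Min P..z0}"
  then obtain x where "x \<in> {v..z0}" "(f ^^ 2) x = c"
    using IVT_between[of v z0 "f ^^ 2" c] continuous_on_funpow[of v z0 2] f2_v z0_props
      interval_bounds Min_P_less_v by auto
  then show "c \<in> (f ^^ 2) ` {v..z0}"
    by auto
qed

lemma even_iterate_image: "{Min P..z0} \<subseteq> (f ^^ (2 * Suc i)) ` {v..z0}"
  using funpow_image_superset[OF f2_image, of i] Min_P_less_v by (simp add: funpow_mult)

lemma odd_iterate_reaches_d:
  assumes j: "odd j" "5 \<le> j" "j \<le> K" and "odd K"
    and y: "u0' \<le> y" "y \<le> v" "(f ^^ j) y \<le> v" and "K = j \<Longrightarrow> (f ^^ j) y \<le> d"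
  shows "\<exists>x\<in>{u0'..y}. (f ^^ K) x = d"
proof -
  have hit: "\<exists>x\<in>{u0'..y}. (f ^^ j) x = c" if "(f ^^ j) y \<le> c" "c \<le> z0" for c
    using IVT_between[of u0' y "f ^^ j" c] continuous_on_funpow[of u0' y j] that y
      funpow_u0'[OF j(1,2)] z0_le_f_z0 u0'_props(1) d_props(1) interval_bounds by auto
  show ?thesis
  proof (cases "K = j")
    case True
    then show ?thesis
      using hit[of d] assms d_props(2) z0_props(1) by auto
  next
    case False
    define i where "i = (K - j) div 2 - 1"
    have K: "K = 2 * Suc i + j"
      using False j \<open>odd K\<close> unfolding i_def by presburger
    obtain t where t: "t \<in> {v..z0}" "(f ^^ (2 * Suc i)) t = d"
      using even_iterate_image[of i] d_props z0_props(1) by force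
    obtain x where x: "x \<in> {u0'..y}" "(f ^^ j) x = t"
      using hit[of t] t y(3) by auto
    have "(f ^^ K) x = d"
      by (simp only: K funpow_add comp_apply x(2) t(2))
    then show ?thesis
      using x(1) by blast
  qed
qed

definition mu :: "nat \<Rightarrow> real" where "mu n = Inf {x \<in> {u0'..v}. (f ^^ (m + 2 * n)) x = d}"

lemma mu_props:
  assumes "1 \<le> n"
  shows "mu n \<le> v" "\<And>x. x \<in> {u0'..v} \<Longrightarrow> (f ^^ (m + 2 * n)) x = d \<Longrightarrow> mu n \<le> x"
proof -
  have "(f ^^ (m + 2)) v = (f ^^ m) ((f ^^ 2) v)"
    by (simp only: funpow_add comp_apply)
  then have "(f ^^ (m + 2)) v = Min P"
    using f2_v orbit(5)[OF Min_P_in] by simp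
  then obtain x where "x \<in> {u0'..v}" "(f ^^ (m + 2 * n)) x = d"
    using odd_iterate_reaches_d[of "m + 2" "m + 2 * n" v] m_odd m_ge assms u0'_props(2)
      d_props(1) Min_P_less_v by auto
  note L = level_set_Inf_Sup[OF continuous_on_funpow this]
  show "mu n \<le> v" "\<And>x. x \<in> {u0'..v} \<Longrightarrow> (f ^^ (m + 2 * n)) x = d \<Longrightarrow> mu n \<le> x"
    using L u0'_props(1) d_props(1) interval_bounds unfolding mu_def by auto
qed

lemma periodic_orbit_avoids_d:
  assumes "y \<le> v" "(f ^^ k) y = y" "0 < k"
  shows "(f ^^ N) y \<noteq> d"
proof
  assume "(f ^^ N) y = d"
  then have "(f ^^ (2 + N)) y = z0"
    using d_props(3) by (simp only: funpow_add comp_apply)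
  then obtain r where "(f ^^ r) z0 = y"
    using periodic_point_in_orbit[OF assms(2,3), of "2 + N"] by auto
  moreover have "z0 \<le> (f ^^ r) z0"
    using funpow_z0 z0_le_f_z0 by simp
  ultimately show False
    using assms(1) z0_props(1) by simp
qed

lemma periodic_odd_iterate_left_of_v:
  assumes y: "u0' \<le> y" "y \<le> v" and per: "0 < k" "(f ^^ k) y = y" "odd k"
    and "k < K" "5 \<le> K"
  obtains j where "odd j" "5 \<le> j" "j \<le> K" "(f ^^ j) y \<le> v" "K = j \<Longrightarrow> (f ^^ j) y \<le> d"
proof -
  have "y \<noteq> u0'"
    using periodic_orbit_avoids_d[OF y(2) per(2,1), of 2] u0'_props(3) by auto
  then have f2y: "(f ^^ 2) y \<le> d"
    using u0'_props(4) y by simp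
  have "k \<noteq> 1"
  proof
    assume "k = 1"
    then have "(f ^^ 2) y = y"
      using per(2) by (simp add: numeral_2_eq_2)
    then show False
      using f2y u0'_props(1) y(1) by simp
  qed
  show ?thesis
  proof (cases "k = 3")
    case True
    then have "(f ^^ 5) y = (f ^^ 2) y"
      using per(2) funpow_add[of 2 3 f] by simp
    then show ?thesis
      using that[of 5] f2y d_props(2) \<open>5 \<le> K\<close> by simp
  next
    case False
    then have "5 \<le> k"
      using \<open>k \<noteq> 1\<close> per(1,3) by presburger
    then show ?thesis
      using that[of k] per y(2) \<open>k < K\<close> by simp
  qed
qed

theorem odd_period_bound:
  assumes n: "1 \<le> n" and y: "u0' \<le> y" "y \<le> mu n" and k: "least_period f k y" "odd k"
  shows "m + 2 * n \<le> k"
proof (rule ccontr)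
  assume "\<not> m + 2 * n \<le> k"
  have per: "0 < k" "(f ^^ k) y = y"
    using k(1) by (auto simp: least_period_def)
  have "y \<le> v"
    using mu_props(1)[OF n] y(2) by simp
  moreover have "k < m + 2 * n" "5 \<le> m + 2 * n"
    using \<open>\<not> m + 2 * n \<le> k\<close> m_ge n by auto
  ultimately obtain j where "odd j" "5 \<le> j" "j \<le> m + 2 * n" "(f ^^ j) y \<le> v"
      "m + 2 * n = j \<Longrightarrow> (f ^^ j) y \<le> d"
    using periodic_odd_iterate_left_of_v[OF y(1) _ per k(2)] by blast
  then obtain x where x: "x \<in> {u0'..y}" "(f ^^ (m + 2 * n)) x = d"
    using odd_iterate_reaches_d[of j "m + 2 * n" y] m_odd y(1) \<open>y \<le> v\<close> by auto
  then have "x = y"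
    using mu_props(2)[OF n, of x] y(2) \<open>y \<le> v\<close> by auto
  then show False
    using x(2) periodic_orbit_avoids_d[OF \<open>y \<le> v\<close> per(2,1)] by simp
qed

end

theorem lemma9:
  fixes f :: "real \<Rightarrow> real" and a b :: real and m n :: nat and P :: "real set"
    and v z :: real
  assumes ab: "a \<le> b"
    and cont: "continuous_on {a..b} f"
    and maps: "f ` {a..b} \<subseteq> {a..b}"
    and m_odd: "odd m" and m_ge: "m \<ge> 3"
    and orb: "periodic_orbit f {a..b} m P"
    and v_in: "v \<in> {Min P ..< (f ^^ (m - 1)) (Min P)}"
    and v_map: "f v = (f ^^ (m - 1)) (Min P)"
    and z_in: "z \<in> {v <..< (f ^^ (m - 1)) (Min P)}"
    and z_fix: "f z = z"
    and n_ge: "n \<ge> 1"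
  defines "z0 \<equiv> Inf {x \<in> {v..z}. (f ^^ 2) x = x}"
  defines "d \<equiv> Sup {x \<in> {Min P..v}. (f ^^ 2) x = z0}"
  defines "u1 \<equiv> Inf {x \<in> {d..v}. (f ^^ 2) x = d}"
  defines "u0' \<equiv> Sup {x \<in> {u1..v}. (f ^^ 2) x = d}"
  defines "mu \<equiv> Inf {x \<in> {u0'..v}. (f ^^ (m + 2 * n)) x = d}"
  shows "\<forall>y \<in> {u0'..mu}. \<forall>k. least_period f k y \<and> odd k \<longrightarrow> k \<ge> m + 2 * n"
proof -
  interpret S: odd_orbit_setting f a b m P v z
    using cont maps m_odd m_ge orb v_in v_map z_in z_fix by unfold_locales
  show ?thesis
    using S.odd_period_bound[OF n_ge]
    unfolding mu_def u0'_def u1_def d_def z0_def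
      S.mu_def S.u0'_def S.u1_def S.d_def S.z0_def
    by auto
qed

end
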